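(* Let $X$ be a compact metrizable space, let $G$ be a countable amenable group, let $T$ be an action of $G$ on $X$ by homeomorphisms, let $R$ be a commutative unital ring, and let $k$ be a nonnegative even integer. Then $\mathrm{smcid}_k(T;R)\leq\mathrm{mcid}_k(T;R)$.
   Context: Covers: a finite open cover of a closed set $Y \subseteq X$ in $X$ is a finite collection of nonempty open subsets of $X$ whose union contains $Y$. A cover $\mathcal{V}$ refines $\mathcal{U}$ if each member of $\mathcal{V}$ lies in some member of $\mathcal{U}$. The order is $\mathrm{ord}(\mathcal{U}) = \max_{x\in X}\mathrm{Card}\{U\in\mathcal{U}: x\in U\} - 1$, and $\mathcal{D}_Y(\mathcal{U})$ is the least order of a finite open cover of $Y$ in $X$ refining $\mathcal{U}$. With $\mathcal{U}\cap Y = \{U\cap Y : U\in\mathcal{U}, U\cap Y\neq\varnothing\}$, $\check{H}^k(Y;\mathcal{U};R)$ is the set of elements of Čech cohomology $\check{H}^k(Y;R)$ representable by Čech cocycles arising from $\mathcal{U}\cap Y$. A nonempty finite $F \subseteq G$ is $(G_0,\delta)$-invariant if $\mathrm{Card}(gF\cap F) > (1-\delta)\mathrm{Card}(F)$ for all $g\in G_0$. $\mathrm{mcid}_k(T;R)$ is the largest $d\in[0,\infty)$ such that for every $\varepsilon>0$ there are a closed $Y\subseteq X$, a finite open cover $\mathcal{U}$ of $Y$ in $X$ with $\mathcal{D}_Y(\mathcal{U})\in\{k,k+1\}$, and $\eta\in\check{H}^k(Y;\mathcal{U};R)$ such that for every finite $G_0\subseteq G$ and every $\delta>0$ there are a $(G_0,\delta)$-invariant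 nonempty finite $F\subseteq G$ and $F_0\subseteq F$ with: (1) the cup product over $g\in F_0$ of the classes $T_g^*(\eta)\in\check{H}^k(T_g^{-1}(Y);R)$, restricted to $\bigcap_{h\in F_0}T_h^{-1}(Y)$, is nonzero (the empty cup product being $1$); and (2) $k\,\mathrm{Card}(F_0)/\mathrm{Card}(F) > d-\varepsilon$. Elementary symmetric polynomials of classes: for a finite set $F$ with $n=\mathrm{Card}(F)$ enumerated as $g_1,\dots,g_n$, classes $\eta_g\in\check{H}^k(X;R)$ ($k$ even) and $0\le r\le n$, $\sigma_r((\eta_g)_{g\in F}) = \sum_{1\le j_1<\cdots<j_r\le n}\eta_{g_{j_1}}\smile\cdots\smile\eta_{g_{j_r}}$ (with $\sigma_0 = 1$). $\mathrm{smcid}_k(T;R)$ is the largest $d\in[0,\infty)$ such that there are a finite open cover $\mathcal{U}$ of $X$ with $\mathcal{D}_X(\mathcal{U})\in\{k,k+1\}$ and $\eta\in\check{H}^k(X;\mathcal{U};R)$ such that for every finite $G_0\subseteq G$ and every $\varepsilon>0$ there are a $(G_0,\varepsilon)$-invariant nonempty finite $F\subseteq G$ and $r\in\{0,1,\ldots,\mathrm{Card}(F)\}$ with $\sigma_r((T_g^*(\eta))_{g\in F})\neq 0$ and $kr/\mathrm{Card}(F) > d-\varepsilon$. *)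

theory Defs
  imports "HOL-Analysis.Analysis" "HOL-Algebra.Group"
begin

definition group_action_homeo ::
  "('g, 'b) monoid_scheme \<Rightarrow> 'a topology \<Rightarrow> ('g \<Rightarrow> 'a \<Rightarrow> 'a) \<Rightarrow> bool" where
  "group_action_homeo G X T \<longleftrightarrow>
     (\<forall>g\<in>carrier G. homeomorphic_map X X (T g)) \<and>
     (\<forall>x\<in>topspace X. T \<one>\<^bsub>G\<^esub> x = x) \<and>
     (\<forall>g\<in>carrier G. \<forall>h\<in>carrier G. \<forall>x\<in>topspace X. T (g \<otimes>\<^bsub>G\<^esub> h) x = T g (T h x))"

definition invariant_set :: "('g, 'b) monoid_scheme \<Rightarrow> 'g set \<Rightarrow> real \<Rightarrow> 'g set \<Rightarrow> bool" where
  "invariant_set G G0 \<delta> F \<longleftrightarrow> F \<noteq> {} \<and> finite F \<and> F \<subseteq> carrier G \<and>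
     (\<forall>g\<in>G0. real (card ((\<lambda>f. g \<otimes>\<^bsub>G\<^esub> f) ` F \<inter> F)) > (1 - \<delta>) * real (card F))"

definition amenable :: "('g, 'b) monoid_scheme \<Rightarrow> bool" where
  "amenable G \<longleftrightarrow> (\<forall>G0 \<delta>. finite G0 \<and> G0 \<subseteq> carrier G \<and> \<delta> > 0 \<longrightarrow> (\<exists>F. invariant_set G G0 \<delta> F))"

definition fin_open_cover :: "'a topology \<Rightarrow> 'a set \<Rightarrow> 'a set set \<Rightarrow> bool" where
  "fin_open_cover X Y \<U> \<longleftrightarrow> finite \<U> \<and> (\<forall>U\<in>\<U>. openin X U \<and> U \<noteq> {}) \<and> Y \<subseteq> \<Union>\<U>"

definition refines :: "'a set set \<Rightarrow> 'a set set \<Rightarrow> bool" where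
  "refines \<V> \<U> \<longleftrightarrow> (\<forall>V\<in>\<V>. \<exists>U\<in>\<U>. V \<subseteq> U)"

definition cover_ord :: "'a topology \<Rightarrow> 'a set set \<Rightarrow> int" where
  "cover_ord X \<U> = int (Max (insert 0 ((\<lambda>x. card {U\<in>\<U>. x \<in> U}) ` topspace X))) - 1"

definition cover_dim :: "'a topology \<Rightarrow> 'a set \<Rightarrow> 'a set set \<Rightarrow> int" where
  "cover_dim X Y \<U> = (LEAST m. \<exists>\<V>. fin_open_cover X Y \<V> \<and> refines \<V> \<U> \<and> m = cover_ord X \<V>)"

definition cover_restrict :: "'a set set \<Rightarrow> 'a set \<Rightarrow> 'a set set" where
  "cover_restrict \<U> Y = {U \<inter> Y | U. U \<in> \<U> \<and> U \<inter> Y \<noteq> {}}"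

section \<open>Cech cohomology with coefficients in a commutative ring (ordered Cech cochains)\<close>

type_synonym ('a, 'r) cochain = "'a set list \<Rightarrow> 'r"
type_synonym ('a, 'r) cech_class = "('a set set \<times> ('a, 'r) cochain) set"

definition open_cover_of :: "'a topology \<Rightarrow> 'a set \<Rightarrow> 'a set set \<Rightarrow> bool" where
  "open_cover_of X Y \<U> \<longleftrightarrow> (\<forall>U\<in>\<U>. openin (subtopology X Y) U) \<and> \<Union>\<U> = Y"

text \<open>n-simplices of the nerve: ordered (n+1)-tuples with nonempty intersection.\<close>
definition nerve :: "'a set set \<Rightarrow> nat \<Rightarrow> 'a set list set" where
  "nerve \<U> n = {s. length s = Suc n \<and> set s \<subseteq> \<U> \<and> \<Inter>(set s) \<noteq> {}}"

definition cobdry :: "('a, 'r::comm_ring_1) cochain \<Rightarrow> ('a, 'r) cochain" where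
  "cobdry c s = (\<Sum>i<length s. (-1) ^ i * c (take i s @ drop (Suc i) s))"

definition is_cochain :: "'a set set \<Rightarrow> nat \<Rightarrow> ('a, 'r::comm_ring_1) cochain \<Rightarrow> bool" where
  "is_cochain \<U> n c \<longleftrightarrow> (\<forall>s. s \<notin> nerve \<U> n \<longrightarrow> c s = 0)"

definition cocycle :: "'a set set \<Rightarrow> nat \<Rightarrow> ('a, 'r::comm_ring_1) cochain \<Rightarrow> bool" where
  "cocycle \<U> n c \<longleftrightarrow> is_cochain \<U> n c \<and> (\<forall>s\<in>nerve \<U> (Suc n). cobdry c s = 0)"

definition coboundary :: "'a set set \<Rightarrow> nat \<Rightarrow> ('a, 'r::comm_ring_1) cochain \<Rightarrow> bool" where
  "coboundary \<U> n c \<longleftrightarrow>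
     (\<exists>b. \<forall>s\<in>nerve \<U> n. c s = (case n of 0 \<Rightarrow> 0 | Suc m \<Rightarrow> cobdry b s))"

text \<open>Projection of covers along a map f: lam sends each V into a member of the
  target cover containing f(V). With f = id this is a refinement projection.\<close>
definition cech_map :: "('a \<Rightarrow> 'c) \<Rightarrow> 'a set set \<Rightarrow> 'c set set \<Rightarrow> ('a set \<Rightarrow> 'c set) \<Rightarrow> bool" where
  "cech_map f \<V> \<U> lam \<longleftrightarrow> (\<forall>V\<in>\<V>. lam V \<in> \<U> \<and> f ` V \<subseteq> lam V)"

definition pull :: "'a set set \<Rightarrow> nat \<Rightarrow> ('a set \<Rightarrow> 'c set) \<Rightarrow> ('c, 'r::comm_ring_1) cochain \<Rightarrow> ('a, 'r) cochain" where
  "pull \<V> n lam c s = (if s \<in> nerve \<V> n then c (map lam s) else 0)"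

definition cech_rep :: "'a topology \<Rightarrow> 'a set \<Rightarrow> nat \<Rightarrow> ('a set set \<times> ('a, 'r::comm_ring_1) cochain) \<Rightarrow> bool" where
  "cech_rep X Y n p \<longleftrightarrow> open_cover_of X Y (fst p) \<and> cocycle (fst p) n (snd p)"

definition cech_rel :: "'a topology \<Rightarrow> 'a set \<Rightarrow> nat \<Rightarrow> ('a set set \<times> ('a, 'r::comm_ring_1) cochain)
    \<Rightarrow> ('a set set \<times> ('a, 'r) cochain) \<Rightarrow> bool" where
  "cech_rel X Y n p q \<longleftrightarrow> (\<exists>\<W> lam mu. open_cover_of X Y \<W> \<and> cech_map id \<W> (fst p) lam \<and>
      cech_map id \<W> (fst q) mu \<and>
      coboundary \<W> n (\<lambda>s. pull \<W> n lam (snd p) s - pull \<W> n mu (snd q) s))"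

definition cech_cls :: "'a topology \<Rightarrow> 'a set \<Rightarrow> nat \<Rightarrow> ('a set set \<times> ('a, 'r::comm_ring_1) cochain) \<Rightarrow> ('a, 'r) cech_class" where
  "cech_cls X Y n p = {q. cech_rep X Y n q \<and> cech_rel X Y n q p}"

text \<open>The Cech cohomology group H^n(Y;R) of the subspace Y of X (as a set of classes).\<close>
definition cech_H :: "'a topology \<Rightarrow> 'a set \<Rightarrow> nat \<Rightarrow> ('a, 'r::comm_ring_1) cech_class set" where
  "cech_H X Y n = cech_cls X Y n ` {p. cech_rep X Y n p}"

definition cech_zero :: "'a topology \<Rightarrow> 'a set \<Rightarrow> nat \<Rightarrow> ('a, 'r::comm_ring_1) cech_class" where
  "cech_zero X Y n = cech_cls X Y n ({Y}, \<lambda>s. 0)"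

definition cech_one :: "'a topology \<Rightarrow> 'a set \<Rightarrow> ('a, 'r::comm_ring_1) cech_class" where
  "cech_one X Y = cech_cls X Y 0 ({Y}, \<lambda>s. if s \<in> nerve {Y} 0 then 1 else 0)"

definition cech_add :: "'a topology \<Rightarrow> 'a set \<Rightarrow> nat \<Rightarrow> ('a, 'r::comm_ring_1) cech_class
    \<Rightarrow> ('a, 'r) cech_class \<Rightarrow> ('a, 'r) cech_class" where
  "cech_add X Y n A B = (SOME C. \<exists>p\<in>A. \<exists>q\<in>B. \<exists>\<W> lam mu. open_cover_of X Y \<W> \<and>
      cech_map id \<W> (fst p) lam \<and> cech_map id \<W> (fst q) mu \<and>
      C = cech_cls X Y n (\<W>, \<lambda>s. pull \<W> n lam (snd p) s + pull \<W> n mu (snd q) s))"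

text \<open>Alexander-Whitney cup product of ordered Cech cochains.\<close>
definition cup_cochain :: "'a set set \<Rightarrow> nat \<Rightarrow> nat \<Rightarrow> ('a, 'r::comm_ring_1) cochain \<Rightarrow> ('a, 'r) cochain \<Rightarrow> ('a, 'r) cochain" where
  "cup_cochain \<W> p q c d s = (if s \<in> nerve \<W> (p + q) then c (take (Suc p) s) * d (drop p s) else 0)"

definition cech_cup :: "'a topology \<Rightarrow> 'a set \<Rightarrow> nat \<Rightarrow> nat \<Rightarrow> ('a, 'r::comm_ring_1) cech_class
    \<Rightarrow> ('a, 'r) cech_class \<Rightarrow> ('a, 'r) cech_class" where
  "cech_cup X Y p q A B = (SOME C. \<exists>a\<in>A. \<exists>b\<in>B. \<exists>\<W> lam mu. open_cover_of X Y \<W> \<and>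
      cech_map id \<W> (fst a) lam \<and> cech_map id \<W> (fst b) mu \<and>
      C = cech_cls X Y (p + q) (\<W>, cup_cochain \<W> p q (pull \<W> p lam (snd a)) (pull \<W> q mu (snd b))))"

text \<open>Pullback f^* : H^n(Y) \<rightarrow> H^n(Y') along a continuous map f : Y' \<rightarrow> Y
  (restriction of classes is the case f = id, Y' a subspace of Y).\<close>
definition cech_pullback :: "'a topology \<Rightarrow> 'a set \<Rightarrow> 'c topology \<Rightarrow> 'c set \<Rightarrow> ('a \<Rightarrow> 'c) \<Rightarrow> nat
    \<Rightarrow> ('c, 'r::comm_ring_1) cech_class \<Rightarrow> ('a, 'r) cech_class" where
  "cech_pullback X' Y' X Y f n A = (SOME C. \<exists>p\<in>A. \<exists>\<V> lam. open_cover_of X' Y' \<V> \<and>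
      cech_map f \<V> (fst p) lam \<and> C = cech_cls X' Y' n (\<V>, pull \<V> n lam (snd p)))"

text \<open>H^n(Y; U; R): classes represented by Cech cocycles on the cover U \<inter> Y.\<close>
definition cech_H_cov :: "'a topology \<Rightarrow> 'a set \<Rightarrow> 'a set set \<Rightarrow> nat \<Rightarrow> ('a, 'r::comm_ring_1) cech_class set" where
  "cech_H_cov X Y \<U> n = {\<eta> \<in> cech_H X Y n. \<exists>c. cech_rep X Y n (cover_restrict \<U> Y, c) \<and>
      \<eta> = cech_cls X Y n (cover_restrict \<U> Y, c)}"

fun cech_cup_list :: "'a topology \<Rightarrow> 'a set \<Rightarrow> nat \<Rightarrow> ('a, 'r::comm_ring_1) cech_class list \<Rightarrow> ('a, 'r) cech_class" where
  "cech_cup_list X Y k [] = cech_one X Y"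
| "cech_cup_list X Y k (A # As) = cech_cup X Y k (k * length As) A (cech_cup_list X Y k As)"

fun cech_sum_list :: "'a topology \<Rightarrow> 'a set \<Rightarrow> nat \<Rightarrow> ('a, 'r::comm_ring_1) cech_class list \<Rightarrow> ('a, 'r) cech_class" where
  "cech_sum_list X Y n [] = cech_zero X Y n"
| "cech_sum_list X Y n (A # As) = cech_add X Y n A (cech_sum_list X Y n As)"

text \<open>Cup product over a finite index set (each factor of degree k; the order is
  irrelevant for even k).\<close>
definition cech_cup_set :: "'a topology \<Rightarrow> 'a set \<Rightarrow> nat \<Rightarrow> 'g set \<Rightarrow> ('g \<Rightarrow> ('a, 'r::comm_ring_1) cech_class)
    \<Rightarrow> ('a, 'r) cech_class" where
  "cech_cup_set X Y k F f = cech_cup_list X Y k (map f (SOME xs. distinct xs \<and> set xs = F))"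

definition cech_esym :: "'a topology \<Rightarrow> nat \<Rightarrow> 'g set \<Rightarrow> ('g \<Rightarrow> ('a, 'r::comm_ring_1) cech_class) \<Rightarrow> nat
    \<Rightarrow> ('a, 'r) cech_class" where
  "cech_esym X k F f r = cech_sum_list X (topspace X) (k * r)
     (map (\<lambda>S. cech_cup_set X (topspace X) k S f)
        (SOME xs. distinct xs \<and> set xs = {S. S \<subseteq> F \<and> card S = r}))"

definition preim :: "'a topology \<Rightarrow> ('g \<Rightarrow> 'a \<Rightarrow> 'a) \<Rightarrow> 'g \<Rightarrow> 'a set \<Rightarrow> 'a set" where
  "preim X T g Y = {x \<in> topspace X. T g x \<in> Y}"

definition mcid_prop :: "'a topology \<Rightarrow> ('g, 'b) monoid_scheme \<Rightarrow> ('g \<Rightarrow> 'a \<Rightarrow> 'a) \<Rightarrow> nat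
    \<Rightarrow> 'r::comm_ring_1 itself \<Rightarrow> real \<Rightarrow> bool" where
  "mcid_prop X G T k R d \<longleftrightarrow>
    (\<forall>\<epsilon>>0. \<exists>Y \<U> (\<eta> :: ('a, 'r) cech_class).
       closedin X Y \<and> fin_open_cover X Y \<U> \<and> cover_dim X Y \<U> \<in> {int k, int k + 1} \<and>
       \<eta> \<in> cech_H_cov X Y \<U> k \<and>
       (\<forall>G0 \<delta>. finite G0 \<and> G0 \<subseteq> carrier G \<and> \<delta> > 0 \<longrightarrow>
          (\<exists>F F0. invariant_set G G0 \<delta> F \<and> F0 \<subseteq> F \<and>
             (let Z = topspace X \<inter> \<Inter>((\<lambda>h. preim X T h Y) ` F0) in
               cech_cup_set X Z k F0
                 (\<lambda>g. cech_pullback X Z X (preim X T g Y) id k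
                        (cech_pullback X (preim X T g Y) X Y (T g) k \<eta>))
               \<noteq> cech_zero X Z (k * card F0)) \<and>
             real k * real (card F0) / real (card F) > d - \<epsilon>)))"

definition mcid :: "'a topology \<Rightarrow> ('g, 'b) monoid_scheme \<Rightarrow> ('g \<Rightarrow> 'a \<Rightarrow> 'a) \<Rightarrow> nat
    \<Rightarrow> 'r::comm_ring_1 itself \<Rightarrow> real" where
  "mcid X G T k R = Sup (insert 0 {d. d \<ge> 0 \<and> mcid_prop X G T k R d})"

definition smcid_prop :: "'a topology \<Rightarrow> ('g, 'b) monoid_scheme \<Rightarrow> ('g \<Rightarrow> 'a \<Rightarrow> 'a) \<Rightarrow> nat
    \<Rightarrow> 'r::comm_ring_1 itself \<Rightarrow> real \<Rightarrow> bool" where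
  "smcid_prop X G T k R d \<longleftrightarrow>
    (\<exists>\<U> (\<eta> :: ('a, 'r) cech_class).
       fin_open_cover X (topspace X) \<U> \<and> cover_dim X (topspace X) \<U> \<in> {int k, int k + 1} \<and>
       \<eta> \<in> cech_H_cov X (topspace X) \<U> k \<and>
       (\<forall>G0 \<epsilon>. finite G0 \<and> G0 \<subseteq> carrier G \<and> \<epsilon> > 0 \<longrightarrow>
          (\<exists>F r. invariant_set G G0 \<epsilon> F \<and> r \<le> card F \<and>
             cech_esym X k F (\<lambda>g. cech_pullback X (topspace X) X (topspace X) (T g) k \<eta>) r
               \<noteq> cech_zero X (topspace X) (k * r) \<and>
             real k * real r / real (card F) > d - \<epsilon>)))"

definition smcid :: "'a topology \<Rightarrow> ('g, 'b) monoid_scheme \<Rightarrow> ('g \<Rightarrow> 'a \<Rightarrow> 'a) \<Rightarrow> nat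
    \<Rightarrow> 'r::comm_ring_1 itself \<Rightarrow> real" where
  "smcid X G T k R = Sup (insert 0 {d. d \<ge> 0 \<and> smcid_prop X G T k R d})"

end

theory Submission
  imports Defs
begin

text \<open>Take \<open>Y = X\<close> in the definition of \<open>mcid\<close>. The elementary symmetric polynomial
  \<open>\<sigma>\<^sub>r\<close> of the translates \<open>T\<^sub>g\<^sup>*\<eta>\<close>, \<open>g \<in> F\<close>, is a sum of the cup products over the
  \<open>r\<close>-element subsets \<open>F\<^sub>0 \<subseteq> F\<close>; if it is nonzero, one of these cup products is nonzero,
  and \<open>k card F\<^sub>0 / card F = k r / card F\<close>. So every witness for \<open>smcid\<close> is a witness for
  \<open>mcid\<close>. Making this precise for the concrete Cech classes amounts to showing that
  they are well defined: two refinement projections induce chain homotopic maps on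
  cochains (the prism operator), so representatives compared on a common refinement form an
  equivalence relation. Hence a sum of zero classes is zero and pulling back along the
  identity is the identity.\<close>

section \<open>Coface sums and the prism operator\<close>

lemma cobdry_Nil [simp]: "cobdry c [] = 0"
  by (simp add: cobdry_def)

lemma cobdry_Cons: "cobdry c (x # t) = c t - cobdry (\<lambda>u. c (x # u)) t"
proof -
  have "cobdry c (x # t) = (\<Sum>i<Suc (length t). (-1) ^ i * c (take i (x#t) @ drop (Suc i) (x#t)))"
    by (simp add: cobdry_def)
  also have "\<dots> = c t + (\<Sum>i<length t. (-1) ^ Suc i * c (take (Suc i) (x#t) @ drop (Suc (Suc i)) (x#t)))"
    by (subst sum.lessThan_Suc_shift) simp
  also have "\<dots> = c t - cobdry (\<lambda>u. c (x # u)) t"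
    by (simp add: cobdry_def sum_negf)
  finally show ?thesis .
qed

lemma cobdry_map: "cobdry (\<lambda>t. c (map f t)) s = cobdry c (map f s)"
  by (simp add: cobdry_def take_map drop_map)

lemma cobdry_zero [simp]: "cobdry (\<lambda>s. 0) s = 0"
  by (simp add: cobdry_def)

lemma cobdry_add: "cobdry (\<lambda>s. f s + g s) s = cobdry f s + cobdry g s"
  by (simp add: cobdry_def distrib_left sum.distrib)

lemma cobdry_diff: "cobdry (\<lambda>s. f s - g s) s = cobdry f s - cobdry g s"
  by (simp add: cobdry_def right_diff_distrib sum_subtractf)

lemma cobdry_uminus: "cobdry (\<lambda>s. - f s) s = - cobdry f s"
  by (simp add: cobdry_def sum_negf)

text \<open>For projections \<open>l, m\<close> of a cover, the \<open>i\<close>-th prism face of \<open>(v\<^sub>0, \<dots>, v\<^sub>n)\<close> is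
  \<open>(l v\<^sub>0, \<dots>, l v\<^sub>i, m v\<^sub>i, \<dots>, m v\<^sub>n)\<close>; their alternating sum is a chain homotopy between
  the cochain maps induced by \<open>l\<close> and \<open>m\<close>.\<close>

definition prism_face :: "('a set \<Rightarrow> 'c set) \<Rightarrow> ('a set \<Rightarrow> 'c set) \<Rightarrow> nat \<Rightarrow> 'a set list \<Rightarrow> 'c set list"
  where "prism_face l m i t = map l (take (Suc i) t) @ map m (drop i t)"

definition prism :: "('a set \<Rightarrow> 'c set) \<Rightarrow> ('a set \<Rightarrow> 'c set) \<Rightarrow> ('c, 'r::comm_ring_1) cochain \<Rightarrow> ('a, 'r) cochain"
  where "prism l m c t = (\<Sum>i<length t. (-1) ^ i * c (prism_face l m i t))"

lemma prism_face_0_Cons: "prism_face l m 0 (v # t) = l v # m v # map m t"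
  by (simp add: prism_face_def)

lemma prism_face_Suc_Cons: "prism_face l m (Suc i) (v # t) = l v # prism_face l m i t"
  by (simp add: prism_face_def)

lemma prism_Cons: "prism l m c (v # t) = c (l v # m v # map m t) - prism l m (\<lambda>u. c (l v # u)) t"
proof -
  have "prism l m c (v # t) = (\<Sum>i<Suc (length t). (-1) ^ i * c (prism_face l m i (v#t)))"
    by (simp add: prism_def)
  also have "\<dots> = c (prism_face l m 0 (v#t))
      + (\<Sum>i<length t. (-1) ^ Suc i * c (prism_face l m (Suc i) (v#t)))"
    by (subst sum.lessThan_Suc_shift) simp
  also have "\<dots> = c (l v # m v # map m t) - prism l m (\<lambda>u. c (l v # u)) t"
    by (simp add: prism_def sum_negf prism_face_0_Cons prism_face_Suc_Cons)
  finally show ?thesis .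
qed

lemma prism_homotopy:
  "(\<Sum>i<length s. (-1) ^ i * cobdry c (prism_face l m i s))
     = c (map m s) - c (map l s) - cobdry (prism l m c) s"
proof (induction s arbitrary: c)
  case Nil
  then show ?case by simp
next
  case (Cons v s)
  define c' where "c' = (\<lambda>u. c (l v # u))"
  define c'' where "c'' = (\<lambda>u. c (l v # m v # u))"
  have split: "(\<Sum>i<length (v#s). (-1) ^ i * cobdry c (prism_face l m i (v#s)))
      = cobdry c (prism_face l m 0 (v#s))
        + (\<Sum>i<length s. (-1) ^ Suc i * cobdry c (prism_face l m (Suc i) (v#s)))"
    by (simp add: sum.lessThan_Suc_shift del: sum.lessThan_Suc)
  have first: "cobdry c (prism_face l m 0 (v#s)) = c (m v # map m s) - (c' (map m s) - cobdry c'' (map m s))"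
    by (simp add: prism_face_0_Cons cobdry_Cons c'_def c''_def)
  have rest: "(\<Sum>i<length s. (-1) ^ Suc i * cobdry c (prism_face l m (Suc i) (v#s)))
     = - prism l m c s + (\<Sum>i<length s. (-1) ^ i * cobdry c' (prism_face l m i s))"
    by (simp add: prism_face_Suc_Cons cobdry_Cons c'_def prism_def right_diff_distrib
        sum_subtractf sum_negf)
  have prism_cobdry: "cobdry (prism l m c) (v # s) = prism l m c s - (cobdry c'' (map m s) - cobdry (prism l m c') s)"
    using cobdry_map[of "\<lambda>u. c (l v # m v # u)" m s]
    by (simp add: cobdry_Cons prism_Cons cobdry_diff c'_def c''_def)
  show ?case
    unfolding split first rest Cons.IH[of c'] prism_cobdry
    by (simp add: c'_def algebra_simps del: sum.lessThan_Suc)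
qed

section \<open>Nerves, projections and coboundaries\<close>

lemma nerve_face:
  assumes "s \<in> nerve U (Suc n)" "i < length s"
  shows "take i s @ drop (Suc i) s \<in> nerve U n"
proof -
  have sub: "set (take i s @ drop (Suc i) s) \<subseteq> set s"
    using set_take_subset set_drop_subset by fastforce
  then have "\<Inter>(set s) \<subseteq> \<Inter>(set (take i s @ drop (Suc i) s))"
    by blast
  then show ?thesis using assms sub unfolding nerve_def by auto
qed

lemma nerve_cech_map:
  assumes "cech_map f W U \<rho>" "s \<in> nerve W n"
  shows "map \<rho> s \<in> nerve U n"
proof -
  obtain x where x: "x \<in> \<Inter>(set s)" using assms(2) unfolding nerve_def by auto
  have "f x \<in> \<Inter>(set (map \<rho> s))"
    using assms x unfolding cech_map_def nerve_def by auto
  then show ?thesis using assms unfolding nerve_def cech_map_def by auto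
qed

lemma prism_face_in_nerve:
  assumes "s \<in> nerve W n" "i < length s" "cech_map id W U l" "cech_map id W U m"
  shows "prism_face l m i s \<in> nerve U (Suc n)"
proof -
  have sub: "set (prism_face l m i s) \<subseteq> l ` set s \<union> m ` set s"
    unfolding prism_face_def using set_take_subset set_drop_subset by fastforce
  obtain x where x: "x \<in> \<Inter>(set s)" using assms(1) unfolding nerve_def by auto
  have "x \<in> \<Inter>(set (prism_face l m i s))"
    using sub x assms(1,3,4) unfolding cech_map_def nerve_def by fastforce
  moreover have "set (prism_face l m i s) \<subseteq> U"
    using sub assms(1,3,4) unfolding cech_map_def nerve_def by fastforce
  moreover have "length (prism_face l m i s) = Suc (Suc n)"
    using assms(1,2) unfolding prism_face_def nerve_def by auto
  ultimately show ?thesis unfolding nerve_def by auto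
qed

lemma cech_map_id_self: "cech_map id W W (\<lambda>V. V)"
  unfolding cech_map_def by auto

lemma cech_map_comp:
  assumes "cech_map id W W1 \<pi>" "cech_map id W1 U l"
  shows "cech_map id W U (l \<circ> \<pi>)"
  using assms unfolding cech_map_def by fastforce

text \<open>Requiring \<open>b [] = 0\<close> turns the degree-0 clause of \<^const>\<open>coboundary\<close>, where \<open>c\<close> must
  vanish, into the instance \<open>cobdry b [v] = b []\<close> of the general clause.\<close>

lemma coboundary_iff_cobdry:
  "coboundary W n c \<longleftrightarrow> (\<exists>b. b [] = 0 \<and> (\<forall>s\<in>nerve W n. c s = cobdry b s))"
proof (cases n)
  case 0
  have "cobdry b s = 0" if "b [] = 0" "s \<in> nerve W 0" for b :: "('a, 'b) cochain" and s
    using that by (auto simp: nerve_def length_Suc_conv cobdry_Cons)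
  then show ?thesis
    using 0 unfolding coboundary_def by (auto intro!: exI[of _ "\<lambda>t. 0"])
next
  case (Suc m)
  have normalise: "cobdry (\<lambda>t. if t = [] then 0 else b t) s = cobdry b s" if "s \<in> nerve W n" for b s
    unfolding cobdry_def by (rule sum.cong) (use that Suc in \<open>auto simp: nerve_def\<close>)
  show ?thesis
  proof
    assume "coboundary W n c"
    then obtain b where "\<forall>s\<in>nerve W n. c s = cobdry b s"
      using Suc by (auto simp: coboundary_def)
    then show "\<exists>b. b [] = 0 \<and> (\<forall>s\<in>nerve W n. c s = cobdry b s)"
      by (intro exI[of _ "\<lambda>t. if t = [] then 0 else b t"]) (simp add: normalise)
  qed (use Suc in \<open>auto simp: coboundary_def\<close>)
qed

lemma coboundary_cong:
  assumes "coboundary W n c" "\<And>s. s \<in> nerve W n \<Longrightarrow> c' s = c s"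
  shows "coboundary W n c'"
  using assms unfolding coboundary_def by auto

lemma coboundary_zero: "coboundary W n (\<lambda>s. 0)"
  unfolding coboundary_iff_cobdry by (intro exI[of _ "\<lambda>t. 0"]) simp

lemma coboundary_add:
  assumes "coboundary W n c1" "coboundary W n c2"
  shows "coboundary W n (\<lambda>s. c1 s + c2 s)"
proof -
  obtain b1 b2 where "b1 [] = 0" "\<forall>s\<in>nerve W n. c1 s = cobdry b1 s"
    and "b2 [] = 0" "\<forall>s\<in>nerve W n. c2 s = cobdry b2 s"
    using assms unfolding coboundary_iff_cobdry by blast
  then show ?thesis
    unfolding coboundary_iff_cobdry by (intro exI[of _ "\<lambda>t. b1 t + b2 t"]) (simp add: cobdry_add)
qed

lemma coboundary_uminus:
  assumes "coboundary W n c"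
  shows "coboundary W n (\<lambda>s. - c s)"
proof -
  obtain b where "b [] = 0" "\<forall>s\<in>nerve W n. c s = cobdry b s"
    using assms unfolding coboundary_iff_cobdry by blast
  then show ?thesis
    unfolding coboundary_iff_cobdry by (intro exI[of _ "\<lambda>t. - b t"]) (simp add: cobdry_uminus)
qed

lemma coboundary_pull:
  assumes "coboundary U n c" "cech_map f W U \<rho>"
  shows "coboundary W n (pull W n \<rho> c)"
proof -
  obtain b where "b [] = 0" "\<forall>s\<in>nerve U n. c s = cobdry b s"
    using assms(1) unfolding coboundary_iff_cobdry by blast
  then show ?thesis
    unfolding coboundary_iff_cobdry using nerve_cech_map[OF assms(2)]
    by (intro exI[of _ "\<lambda>t. b (map \<rho> t)"]) (simp add: pull_def cobdry_map)
qed

lemma cocycle_add: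
  assumes "cocycle W n c1" "cocycle W n c2"
  shows "cocycle W n (\<lambda>s. c1 s + c2 s)"
  using assms unfolding cocycle_def is_cochain_def by (auto simp: cobdry_add)

lemma cocycle_pull:
  assumes "cocycle U n c" "cech_map f V U \<rho>"
  shows "cocycle V n (pull V n \<rho> c)"
  unfolding cocycle_def
proof
  show "is_cochain V n (pull V n \<rho> c)" by (simp add: is_cochain_def pull_def)
  show "\<forall>s\<in>nerve V (Suc n). cobdry (pull V n \<rho> c) s = 0"
  proof
    fix s assume s: "s \<in> nerve V (Suc n)"
    have "cobdry (pull V n \<rho> c) s = cobdry (\<lambda>t. c (map \<rho> t)) s"
      unfolding cobdry_def
      by (rule sum.cong) (use nerve_face[OF s] in \<open>auto simp: pull_def\<close>)
    also have "\<dots> = cobdry c (map \<rho> s)" by (rule cobdry_map)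
    also have "\<dots> = 0" using assms nerve_cech_map[OF assms(2) s] unfolding cocycle_def by auto
    finally show "cobdry (pull V n \<rho> c) s = 0" .
  qed
qed

lemma coboundary_pull_diff:
  assumes "cocycle U n c" "cech_map id W U l" "cech_map id W U m"
  shows "coboundary W n (\<lambda>s. pull W n l c s - pull W n m c s)"
  unfolding coboundary_iff_cobdry
proof (intro exI[of _ "\<lambda>t. - prism l m c t"] conjI ballI)
  show "- prism l m c [] = 0" by (simp add: prism_def)
  fix s assume s: "s \<in> nerve W n"
  have "(\<Sum>i<length s. (-1) ^ i * cobdry c (prism_face l m i s)) = 0"
    using prism_face_in_nerve[OF s _ assms(2,3)] assms(1) unfolding cocycle_def
    by (auto intro!: sum.neutral)
  then show "pull W n l c s - pull W n m c s = cobdry (\<lambda>t. - prism l m c t) s"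
    using s prism_homotopy[of c l m s] by (simp add: pull_def cobdry_uminus algebra_simps)
qed

section \<open>Equivalence of Cech representatives\<close>

lemma common_refinement:
  assumes "open_cover_of X Y W1" "open_cover_of X Y W2"
  obtains W \<pi>1 \<pi>2 where "open_cover_of X Y W" "cech_map id W W1 \<pi>1" "cech_map id W W2 \<pi>2"
proof -
  define W where "W = {A \<inter> B | A B. A \<in> W1 \<and> B \<in> W2}"
  define \<pi>1 where "\<pi>1 = (\<lambda>V. SOME A. A \<in> W1 \<and> (\<exists>B\<in>W2. V = A \<inter> B))"
  define \<pi>2 where "\<pi>2 = (\<lambda>V. SOME B. B \<in> W2 \<and> (\<exists>A\<in>W1. V = A \<inter> B))"
  have "\<Union> W = Y"
  proof
    show "\<Union> W \<subseteq> Y" using assms unfolding open_cover_of_def W_def by auto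
    show "Y \<subseteq> \<Union> W"
    proof
      fix y assume "y \<in> Y"
      then obtain A B where "A \<in> W1" "B \<in> W2" "y \<in> A" "y \<in> B"
        using assms unfolding open_cover_of_def by blast
      then show "y \<in> \<Union> W" unfolding W_def by blast
    qed
  qed
  then have "open_cover_of X Y W"
    using assms unfolding open_cover_of_def W_def by (auto intro: openin_Int)
  moreover have "cech_map id W W1 \<pi>1"
    unfolding cech_map_def
  proof
    fix V assume "V \<in> W"
    then have "\<exists>A. A \<in> W1 \<and> (\<exists>B\<in>W2. V = A \<inter> B)" unfolding W_def by auto
    from someI_ex[OF this] show "\<pi>1 V \<in> W1 \<and> id ` V \<subseteq> \<pi>1 V" unfolding \<pi>1_def by auto
  qed
  moreover have "cech_map id W W2 \<pi>2"
    unfolding cech_map_def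
  proof
    fix V assume "V \<in> W"
    then have "\<exists>B. B \<in> W2 \<and> (\<exists>A\<in>W1. V = A \<inter> B)" unfolding W_def by auto
    from someI_ex[OF this] show "\<pi>2 V \<in> W2 \<and> id ` V \<subseteq> \<pi>2 V" unfolding \<pi>2_def by auto
  qed
  ultimately show ?thesis using that by blast
qed

lemma cech_rel_refl:
  assumes "open_cover_of X Y (fst p)"
  shows "cech_rel X Y n p p"
  unfolding cech_rel_def
  by (rule exI[of _ "fst p"], rule exI[of _ "\<lambda>V. V"], rule exI[of _ "\<lambda>V. V"])
    (use assms cech_map_id_self in \<open>auto intro: coboundary_cong[OF coboundary_zero]\<close>)

lemma cech_rel_sym:
  assumes "cech_rel X Y n p q"
  shows "cech_rel X Y n q p"
proof -
  obtain W l m where W: "open_cover_of X Y W" "cech_map id W (fst p) l" "cech_map id W (fst q) m"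
    and c: "coboundary W n (\<lambda>s. pull W n l (snd p) s - pull W n m (snd q) s)"
    using assms unfolding cech_rel_def by blast
  have "coboundary W n (\<lambda>s. pull W n m (snd q) s - pull W n l (snd p) s)"
    by (rule coboundary_cong[OF coboundary_uminus[OF c]]) simp
  then show ?thesis unfolding cech_rel_def using W by blast
qed

text \<open>On a common refinement of the two witnessing covers the two differences add up, up to
  the difference of two projections of \<open>q\<close>, which is a coboundary by the prism homotopy.\<close>

lemma cech_rel_trans:
  assumes q: "cech_rep X Y n q" and pq: "cech_rel X Y n p q" and qr: "cech_rel X Y n q r"
  shows "cech_rel X Y n p r"
proof -
  obtain W1 l1 m1 where W1: "open_cover_of X Y W1" "cech_map id W1 (fst p) l1" "cech_map id W1 (fst q) m1"
    and c1: "coboundary W1 n (\<lambda>s. pull W1 n l1 (snd p) s - pull W1 n m1 (snd q) s)"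
    using pq unfolding cech_rel_def by blast
  obtain W2 l2 m2 where W2: "open_cover_of X Y W2" "cech_map id W2 (fst q) l2" "cech_map id W2 (fst r) m2"
    and c2: "coboundary W2 n (\<lambda>s. pull W2 n l2 (snd q) s - pull W2 n m2 (snd r) s)"
    using qr unfolding cech_rel_def by blast
  obtain W \<pi>1 \<pi>2 where W: "open_cover_of X Y W" "cech_map id W W1 \<pi>1" "cech_map id W W2 \<pi>2"
    using common_refinement[OF W1(1) W2(1)] by blast
  have d1: "coboundary W n (pull W n \<pi>1 (\<lambda>s. pull W1 n l1 (snd p) s - pull W1 n m1 (snd q) s))"
    by (rule coboundary_pull[OF c1 W(2)])
  have d2: "coboundary W n (pull W n \<pi>2 (\<lambda>s. pull W2 n l2 (snd q) s - pull W2 n m2 (snd r) s))"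
    by (rule coboundary_pull[OF c2 W(3)])
  have d3: "coboundary W n (\<lambda>s. pull W n (m1 \<circ> \<pi>1) (snd q) s - pull W n (l2 \<circ> \<pi>2) (snd q) s)"
    by (rule coboundary_pull_diff) (use q cech_map_comp W W1 W2 in \<open>auto simp: cech_rep_def\<close>)
  have "coboundary W n (\<lambda>s. pull W n (l1 \<circ> \<pi>1) (snd p) s - pull W n (m2 \<circ> \<pi>2) (snd r) s)"
  proof (rule coboundary_cong[OF coboundary_add[OF coboundary_add[OF d1 d3] d2]])
    fix s assume s: "s \<in> nerve W n"
    show "pull W n (l1 \<circ> \<pi>1) (snd p) s - pull W n (m2 \<circ> \<pi>2) (snd r) s =
      pull W n \<pi>1 (\<lambda>s. pull W1 n l1 (snd p) s - pull W1 n m1 (snd q) s) s +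
      (pull W n (m1 \<circ> \<pi>1) (snd q) s - pull W n (l2 \<circ> \<pi>2) (snd q) s) +
      pull W n \<pi>2 (\<lambda>s. pull W2 n l2 (snd q) s - pull W2 n m2 (snd r) s) s"
      using s nerve_cech_map[OF W(2) s] nerve_cech_map[OF W(3) s] by (simp add: pull_def)
  qed
  then show ?thesis unfolding cech_rel_def
    using W(1) cech_map_comp[OF W(2) W1(2)] cech_map_comp[OF W(3) W2(3)] by blast
qed

lemma cech_rel_pull:
  assumes "open_cover_of X Y V" "cech_map id V (fst p) l"
  shows "cech_rel X Y n (V, pull V n l (snd p)) p"
  unfolding cech_rel_def
proof (rule exI[of _ V], rule exI[of _ "\<lambda>V. V"], rule exI[of _ l], intro conjI)
  show "coboundary V n (\<lambda>s. pull V n (\<lambda>V. V) (snd (V, pull V n l (snd p))) s - pull V n l (snd p) s)"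
    by (rule coboundary_cong[OF coboundary_zero]) (simp add: pull_def)
qed (use assms cech_map_id_self in auto)

lemma cech_rep_in_cech_cls: "cech_rep X Y n p \<Longrightarrow> p \<in> cech_cls X Y n p"
  unfolding cech_cls_def by (auto intro: cech_rel_refl simp: cech_rep_def)

lemma cech_cls_eq:
  assumes "cech_rep X Y n p" "cech_rep X Y n q" "cech_rel X Y n p q"
  shows "cech_cls X Y n p = cech_cls X Y n q"
  unfolding cech_cls_def using assms cech_rel_trans cech_rel_sym by blast

lemma cech_rel_pull_trans:
  assumes "cech_rep X Y n p" "cech_rel X Y n p q" "open_cover_of X Y V" "cech_map id V (fst p) l"
  shows "cech_rel X Y n (V, pull V n l (snd p)) q"
  using cech_rel_trans[OF assms(1) cech_rel_pull[OF assms(3,4)] assms(2)] .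

section \<open>The zero class, sums and pullbacks\<close>

lemma cech_rep_zero:
  assumes "Y \<subseteq> topspace X"
  shows "cech_rep X Y n ({Y}, \<lambda>s. 0)"
  using assms unfolding cech_rep_def open_cover_of_def cocycle_def is_cochain_def
  by (auto simp: openin_subtopology_refl)

lemma cech_rel_zero_iff:
  "cech_rel X Y n (W, c) ({Y}, \<lambda>s. 0) \<longleftrightarrow>
     (\<exists>W' \<rho>. open_cover_of X Y W' \<and> cech_map id W' W \<rho> \<and> coboundary W' n (pull W' n \<rho> c))"
proof
  assume "cech_rel X Y n (W, c) ({Y}, \<lambda>s. 0)"
  then obtain W' l and m :: "'a set \<Rightarrow> 'a set" where W': "open_cover_of X Y W'" "cech_map id W' W l"
    and c: "coboundary W' n (\<lambda>s. pull W' n l c s - pull W' n m (\<lambda>s. 0) s)"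
    unfolding cech_rel_def fst_conv snd_conv by blast
  have "coboundary W' n (pull W' n l c)"
    by (rule coboundary_cong[OF c]) (simp add: pull_def)
  then show "\<exists>W' \<rho>. open_cover_of X Y W' \<and> cech_map id W' W \<rho> \<and> coboundary W' n (pull W' n \<rho> c)"
    using W' by blast
next
  assume "\<exists>W' \<rho>. open_cover_of X Y W' \<and> cech_map id W' W \<rho> \<and> coboundary W' n (pull W' n \<rho> c)"
  then obtain W' \<rho> where W': "open_cover_of X Y W'" "cech_map id W' W \<rho>"
    and c: "coboundary W' n (pull W' n \<rho> c)"
    by blast
  have "cech_map id W' {Y} (\<lambda>_. Y)"
    using W'(1) unfolding cech_map_def open_cover_of_def by auto
  moreover have "coboundary W' n (\<lambda>s. pull W' n \<rho> c s - pull W' n (\<lambda>_. Y) (\<lambda>s. 0) s)"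
    by (rule coboundary_cong[OF c]) (simp add: pull_def)
  ultimately show "cech_rel X Y n (W, c) ({Y}, \<lambda>s. 0)"
    unfolding cech_rel_def using W' by auto
qed

lemma cech_rel_zero_add:
  assumes "cocycle W n c1" "cocycle W n c2"
    and "cech_rel X Y n (W, c1) ({Y}, \<lambda>s. 0)" "cech_rel X Y n (W, c2) ({Y}, \<lambda>s. 0)"
  shows "cech_rel X Y n (W, \<lambda>s. c1 s + c2 s) ({Y}, \<lambda>s. 0)"
proof -
  obtain W1 \<rho>1 where W1: "open_cover_of X Y W1" "cech_map id W1 W \<rho>1" "coboundary W1 n (pull W1 n \<rho>1 c1)"
    using assms(3) unfolding cech_rel_zero_iff by blast
  obtain W2 \<rho>2 where W2: "open_cover_of X Y W2" "cech_map id W2 W \<rho>2" "coboundary W2 n (pull W2 n \<rho>2 c2)"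
    using assms(4) unfolding cech_rel_zero_iff by blast
  obtain W3 \<pi>1 \<pi>2 where W3: "open_cover_of X Y W3" "cech_map id W3 W1 \<pi>1" "cech_map id W3 W2 \<pi>2"
    using common_refinement[OF W1(1) W2(1)] by blast
  have d1: "coboundary W3 n (pull W3 n \<pi>1 (pull W1 n \<rho>1 c1))" by (rule coboundary_pull[OF W1(3) W3(2)])
  have d2: "coboundary W3 n (pull W3 n \<pi>2 (pull W2 n \<rho>2 c2))" by (rule coboundary_pull[OF W2(3) W3(3)])
  have d3: "coboundary W3 n (\<lambda>s. pull W3 n (\<rho>1 \<circ> \<pi>1) c2 s - pull W3 n (\<rho>2 \<circ> \<pi>2) c2 s)"
    by (rule coboundary_pull_diff[OF assms(2) cech_map_comp[OF W3(2) W1(2)] cech_map_comp[OF W3(3) W2(2)]])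
  have "coboundary W3 n (pull W3 n (\<rho>1 \<circ> \<pi>1) (\<lambda>s. c1 s + c2 s))"
  proof (rule coboundary_cong[OF coboundary_add[OF coboundary_add[OF d1 d3] d2]])
    fix s assume s: "s \<in> nerve W3 n"
    show "pull W3 n (\<rho>1 \<circ> \<pi>1) (\<lambda>s. c1 s + c2 s) s =
      pull W3 n \<pi>1 (pull W1 n \<rho>1 c1) s +
      (pull W3 n (\<rho>1 \<circ> \<pi>1) c2 s - pull W3 n (\<rho>2 \<circ> \<pi>2) c2 s) +
      pull W3 n \<pi>2 (pull W2 n \<rho>2 c2) s"
      using s nerve_cech_map[OF W3(2) s] nerve_cech_map[OF W3(3) s] by (simp add: pull_def)
  qed
  then show ?thesis
    unfolding cech_rel_zero_iff using W3(1) cech_map_comp[OF W3(2) W1(2)] by blast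
qed

lemma cech_add_zero:
  assumes "Y \<subseteq> topspace X"
  shows "cech_add X Y n (cech_zero X Y n) (cech_zero X Y n) = (cech_zero X Y n :: ('a, 'r::comm_ring_1) cech_class)"
proof -
  define z where "z = ({Y}, \<lambda>s::'a set list. 0::'r)"
  have z: "cech_rep X Y n z" unfolding z_def by (rule cech_rep_zero[OF assms])
  have zero: "cech_zero X Y n = cech_cls X Y n z" unfolding cech_zero_def z_def by simp
  let ?P = "\<lambda>C. \<exists>p\<in>cech_cls X Y n z. \<exists>q\<in>cech_cls X Y n z. \<exists>\<W> lam mu. open_cover_of X Y \<W> \<and>
      cech_map id \<W> (fst p) lam \<and> cech_map id \<W> (fst q) mu \<and>
      C = cech_cls X Y n (\<W>, \<lambda>s. pull \<W> n lam (snd p) s + pull \<W> n mu (snd q) s)"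
  have "\<exists>C. ?P C"
    using cech_rep_in_cech_cls[OF z] z cech_map_id_self unfolding cech_rep_def by blast
  then have "?P (SOME C. ?P C)" by (rule someI_ex)
  then obtain p q W lam mu where p: "p \<in> cech_cls X Y n z" and q: "q \<in> cech_cls X Y n z"
    and W: "open_cover_of X Y W" "cech_map id W (fst p) lam" "cech_map id W (fst q) mu"
    and sum: "(SOME C. ?P C) = cech_cls X Y n (W, \<lambda>s. pull W n lam (snd p) s + pull W n mu (snd q) s)"
    by blast
  have p': "cech_rep X Y n p" "cech_rel X Y n p z" and q': "cech_rep X Y n q" "cech_rel X Y n q z"
    using p q unfolding cech_cls_def by auto
  have cocycles: "cocycle W n (pull W n lam (snd p))" "cocycle W n (pull W n mu (snd q))"
    using cocycle_pull W p'(1) q'(1) unfolding cech_rep_def by blast+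
  have "cech_rel X Y n (W, \<lambda>s. pull W n lam (snd p) s + pull W n mu (snd q) s) z"
    using cech_rel_zero_add[OF cocycles] cech_rel_pull_trans[OF p' W(1,2)] cech_rel_pull_trans[OF q' W(1,3)]
    unfolding z_def by blast
  moreover have "cech_rep X Y n (W, \<lambda>s. pull W n lam (snd p) s + pull W n mu (snd q) s)"
    using W(1) cocycle_add[OF cocycles] unfolding cech_rep_def by simp
  ultimately show ?thesis
    unfolding cech_add_def zero sum using cech_cls_eq z by blast
qed

lemma cech_sum_list_zero:
  assumes "Y \<subseteq> topspace X" "\<forall>A\<in>set As. A = cech_zero X Y n"
  shows "cech_sum_list X Y n As = (cech_zero X Y n :: ('a, 'r::comm_ring_1) cech_class)"
  using assms(2) by (induction As) (simp_all add: cech_add_zero[OF assms(1)])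

lemma cech_pullback_id:
  assumes "A \<in> cech_H X Y n"
  shows "cech_pullback X Y X Y id n A = (A :: ('a, 'r::comm_ring_1) cech_class)"
proof -
  obtain q where q: "cech_rep X Y n q" "A = cech_cls X Y n q"
    using assms unfolding cech_H_def by auto
  let ?P = "\<lambda>C. \<exists>p\<in>A. \<exists>V lam. open_cover_of X Y V \<and> cech_map id V (fst p) lam \<and>
      C = cech_cls X Y n (V, pull V n lam (snd p))"
  have "\<exists>C. ?P C"
    using cech_rep_in_cech_cls[OF q(1)] q cech_map_id_self unfolding cech_rep_def by blast
  then have "?P (SOME C. ?P C)" by (rule someI_ex)
  then obtain p V lam where p: "p \<in> A" and V: "open_cover_of X Y V" "cech_map id V (fst p) lam"
    and pullback: "(SOME C. ?P C) = cech_cls X Y n (V, pull V n lam (snd p))"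
    by blast
  have p': "cech_rep X Y n p" "cech_rel X Y n p q" using p q(2) unfolding cech_cls_def by auto
  have "cech_rep X Y n (V, pull V n lam (snd p))"
    using V cocycle_pull p'(1) unfolding cech_rep_def by fastforce
  then show ?thesis
    unfolding cech_pullback_def pullback using cech_cls_eq[OF _ q(1) cech_rel_pull_trans[OF p' V]] q(2) by simp
qed

lemma open_cover_preimage:
  assumes "continuous_map X X' f" "open_cover_of X' (topspace X') U"
  obtains V lam where "open_cover_of X (topspace X) V" "cech_map f V U lam"
proof -
  define V where "V = (\<lambda>P. {x \<in> topspace X. f x \<in> P}) ` U"
  define lam where "lam = (\<lambda>W. SOME P. P \<in> U \<and> W = {x \<in> topspace X. f x \<in> P})"
  have "\<Union> V = topspace X"
  proof
    show "\<Union> V \<subseteq> topspace X" unfolding V_def by auto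
    show "topspace X \<subseteq> \<Union> V"
    proof
      fix x assume x: "x \<in> topspace X"
      then have "f x \<in> topspace X'" using assms(1) by (auto simp: continuous_map_def)
      then obtain P where "P \<in> U" "f x \<in> P" using assms(2) unfolding open_cover_of_def by blast
      then show "x \<in> \<Union> V" using x unfolding V_def by blast
    qed
  qed
  then have "open_cover_of X (topspace X) V"
    using assms unfolding V_def open_cover_of_def
    by (auto intro: openin_continuous_map_preimage)
  moreover have "cech_map f V U lam"
    unfolding cech_map_def
  proof
    fix W assume "W \<in> V"
    then have "\<exists>P. P \<in> U \<and> W = {x \<in> topspace X. f x \<in> P}" unfolding V_def by auto
    from someI_ex[OF this] show "lam W \<in> U \<and> f ` W \<subseteq> lam W" unfolding lam_def by auto
  qed
  ultimately show ?thesis using that by blast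
qed

lemma cech_pullback_in_cech_H:
  assumes "continuous_map X X' f" "\<eta> \<in> cech_H X' (topspace X') n"
  shows "cech_pullback X (topspace X) X' (topspace X') f n \<eta> \<in> (cech_H X (topspace X) n :: ('a, 'r::comm_ring_1) cech_class set)"
proof -
  obtain q where q: "cech_rep X' (topspace X') n q" "\<eta> = cech_cls X' (topspace X') n q"
    using assms(2) unfolding cech_H_def by auto
  let ?P = "\<lambda>C. \<exists>p\<in>\<eta>. \<exists>V lam. open_cover_of X (topspace X) V \<and> cech_map f V (fst p) lam \<and>
      C = cech_cls X (topspace X) n (V, pull V n lam (snd p))"
  obtain V lam where "open_cover_of X (topspace X) V" "cech_map f V (fst q) lam"
    using open_cover_preimage[OF assms(1)] q(1) unfolding cech_rep_def by blast
  then have "\<exists>C. ?P C" using cech_rep_in_cech_cls[OF q(1)] q(2) by blast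
  then have "?P (SOME C. ?P C)" by (rule someI_ex)
  then obtain p V' lam' where p: "p \<in> \<eta>" and V': "open_cover_of X (topspace X) V'" "cech_map f V' (fst p) lam'"
    and pullback: "(SOME C. ?P C) = cech_cls X (topspace X) n (V', pull V' n lam' (snd p))"
    by blast
  have "cech_rep X' (topspace X') n p" using p q(2) unfolding cech_cls_def by auto
  then have "cech_rep X (topspace X) n (V', pull V' n lam' (snd p))"
    using V' cocycle_pull unfolding cech_rep_def by fastforce
  then show ?thesis unfolding cech_pullback_def pullback cech_H_def by blast
qed

lemma set_some_distinct_list:
  assumes "finite A"
  shows "set (SOME xs. distinct xs \<and> set xs = A) = A"
proof -
  have "\<exists>xs. distinct xs \<and> set xs = A" using finite_distinct_list[OF assms] by blast
  then show ?thesis by (rule someI2_ex) simp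
qed

lemma cech_cup_set_cong:
  assumes "finite F" "\<And>g. g \<in> F \<Longrightarrow> f g = f' g"
  shows "cech_cup_set X Y k F f = cech_cup_set X Y k F f'"
proof -
  have "map f (SOME xs. distinct xs \<and> set xs = F) = map f' (SOME xs. distinct xs \<and> set xs = F)"
    using assms(2) set_some_distinct_list[OF assms(1)] by (intro map_cong) auto
  then show ?thesis
    unfolding cech_cup_set_def by (rule arg_cong)
qed

lemma cech_esym_nonzero_imp_cup_set_nonzero:
  assumes "finite F" "cech_esym X k F f r \<noteq> cech_zero X (topspace X) (k * r)"
  obtains F0 where "F0 \<subseteq> F" "card F0 = r"
    "cech_cup_set X (topspace X) k F0 f \<noteq> cech_zero X (topspace X) (k * r)"
proof -
  define L where "L = (SOME xs. distinct xs \<and> set xs = {S. S \<subseteq> F \<and> card S = r})"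
  have "finite {S. S \<subseteq> F \<and> card S = r}"
    using assms(1) by (auto intro: finite_subset[of _ "Pow F"])
  then have L: "set L = {S. S \<subseteq> F \<and> card S = r}"
    unfolding L_def by (rule set_some_distinct_list)
  have esym: "cech_esym X k F f r
      = cech_sum_list X (topspace X) (k * r) (map (\<lambda>S. cech_cup_set X (topspace X) k S f) L)"
    unfolding cech_esym_def L_def ..
  have "\<exists>S\<in>set L. cech_cup_set X (topspace X) k S f \<noteq> cech_zero X (topspace X) (k * r)"
  proof (rule ccontr)
    assume "\<not> ?thesis"
    then have "cech_esym X k F f r = cech_zero X (topspace X) (k * r)"
      unfolding esym by (intro cech_sum_list_zero) auto
    then show False using assms(2) by contradiction
  qed
  then show ?thesis using L that by auto
qed

lemma invariant_set_mono:
  assumes "invariant_set G G0 \<delta>' F" "\<delta>' \<le> \<delta>"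
  shows "invariant_set G G0 \<delta> F"
proof -
  have "(1 - \<delta>) * real (card F) \<le> (1 - \<delta>') * real (card F)"
    using assms(2) by (intro mult_right_mono) auto
  then show ?thesis
    using assms(1) unfolding invariant_set_def by (auto intro: le_less_trans)
qed

section \<open>Comparing smcid and mcid\<close>

lemma mcid_prop_le:
  assumes "mcid_prop X G T k R d"
  shows "d \<le> real k + 1"
proof -
  have "\<exists>F F0. invariant_set G {} 1 F \<and> F0 \<subseteq> F \<and> real k * real (card F0) / real (card F) > d - 1"
    using assms unfolding mcid_prop_def
    by (elim allE[of _ 1] impE exE conjE allE[of _ "{}"]) auto
  then obtain F F0 where F: "invariant_set G {} 1 F" "F0 \<subseteq> F"
    and ratio: "real k * real (card F0) / real (card F) > d - 1"
    by blast
  have "finite F" "F \<noteq> {}" using F(1) unfolding invariant_set_def by auto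
  then have "card F0 \<le> card F" "card F > 0" using card_mono F(2) by auto
  then have "real k * real (card F0) / real (card F) \<le> real k"
    by (simp add: divide_le_eq mult_left_mono)
  then show ?thesis using ratio by linarith
qed

lemma group_action_homeo_continuous:
  "group_action_homeo G X T \<Longrightarrow> g \<in> carrier G \<Longrightarrow> continuous_map X X (T g)"
  unfolding group_action_homeo_def by (auto intro: homeomorphic_imp_continuous_map)

lemma preim_topspace:
  assumes "group_action_homeo G X T" "g \<in> carrier G"
  shows "preim X T g (topspace X) = topspace X"
  using group_action_homeo_continuous[OF assms] unfolding preim_def continuous_map_def by blast

lemma cech_pullback_translate_topspace:
  fixes \<eta> :: "('a, 'r::comm_ring_1) cech_class"
  assumes "group_action_homeo G X T" "g \<in> carrier G" "\<eta> \<in> cech_H X (topspace X) k"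
  shows "cech_pullback X (topspace X) X (preim X T g (topspace X)) id k
           (cech_pullback X (preim X T g (topspace X)) X (topspace X) (T g) k \<eta>)
         = cech_pullback X (topspace X) X (topspace X) (T g) k \<eta>"
  using cech_pullback_id cech_pullback_in_cech_H[OF group_action_homeo_continuous[OF assms(1,2)] assms(3)]
  unfolding preim_topspace[OF assms(1,2)] by blast

lemma smcid_prop_imp_mcid_prop:
  fixes X :: "'a topology"
  assumes action: "group_action_homeo G X T" and smcid: "smcid_prop X G T k TYPE('r::comm_ring_1) d"
  shows "mcid_prop X G T k TYPE('r) d"
proof -
  let ?S = "topspace X"
  let ?f = "\<lambda>g. cech_pullback X ?S X ?S (T g) k"
  obtain U and \<eta> :: "('a, 'r) cech_class"
    where U: "fin_open_cover X ?S U" "cover_dim X ?S U \<in> {int k, int k + 1}" "\<eta> \<in> cech_H_cov X ?S U k"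
    and esym: "\<forall>G0 \<epsilon>. finite G0 \<and> G0 \<subseteq> carrier G \<and> \<epsilon> > 0 \<longrightarrow>
          (\<exists>F r. invariant_set G G0 \<epsilon> F \<and> r \<le> card F \<and>
             cech_esym X k F (\<lambda>g. ?f g \<eta>) r \<noteq> cech_zero X ?S (k * r) \<and>
             real k * real r / real (card F) > d - \<epsilon>)"
    using smcid unfolding smcid_prop_def by blast
  have \<eta>: "\<eta> \<in> cech_H X ?S k" using U(3) unfolding cech_H_cov_def by blast
  have witness: "\<exists>F F0. invariant_set G G0 \<delta> F \<and> F0 \<subseteq> F \<and>
      (let Z = ?S \<inter> \<Inter>((\<lambda>h. preim X T h ?S) ` F0) in
         cech_cup_set X Z k F0
           (\<lambda>g. cech_pullback X Z X (preim X T g ?S) id k (cech_pullback X (preim X T g ?S) X ?S (T g) k \<eta>))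
         \<noteq> cech_zero X Z (k * card F0)) \<and>
      real k * real (card F0) / real (card F) > d - \<epsilon>"
    if G0: "finite G0" "G0 \<subseteq> carrier G" and pos: "\<delta> > 0" "\<epsilon> > 0" for G0 \<delta> \<epsilon>
  proof -
    obtain F r where F: "invariant_set G G0 (min \<delta> \<epsilon>) F"
      and nonzero: "cech_esym X k F (\<lambda>g. ?f g \<eta>) r \<noteq> cech_zero X ?S (k * r)"
      and ratio: "real k * real r / real (card F) > d - min \<delta> \<epsilon>"
      using esym G0 pos by (metis min_less_iff_conj)
    have "finite F" "F \<subseteq> carrier G" using F unfolding invariant_set_def by auto
    obtain F0 where F0: "F0 \<subseteq> F" "card F0 = r"
      and cup: "cech_cup_set X ?S k F0 (\<lambda>g. ?f g \<eta>) \<noteq> cech_zero X ?S (k * r)"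
      using cech_esym_nonzero_imp_cup_set_nonzero[OF \<open>finite F\<close> nonzero] by blast
    have "finite F0" and F0_carrier: "F0 \<subseteq> carrier G"
      using F0(1) \<open>finite F\<close> \<open>F \<subseteq> carrier G\<close> finite_subset by auto
    have "?S \<inter> \<Inter>((\<lambda>h. preim X T h ?S) ` F0) = ?S"
      using preim_topspace[OF action] F0_carrier by auto
    moreover have "cech_cup_set X ?S k F0
        (\<lambda>g. cech_pullback X ?S X (preim X T g ?S) id k (cech_pullback X (preim X T g ?S) X ?S (T g) k \<eta>))
      = cech_cup_set X ?S k F0 (\<lambda>g. ?f g \<eta>)"
      using cech_pullback_translate_topspace[OF action _ \<eta>] F0_carrier
      by (intro cech_cup_set_cong[OF \<open>finite F0\<close>]) auto
    ultimately show ?thesis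
      using invariant_set_mono[OF F min.cobounded1] F0 cup ratio
      by (intro exI[of _ F] exI[of _ F0]) (auto simp: Let_def)
  qed
  show ?thesis
    unfolding mcid_prop_def
    by (intro allI impI exI[of _ ?S] exI[of _ U] exI[of _ \<eta>] conjI closedin_topspace U)
      (use witness in blast)
qed

theorem lemma4p3:
  fixes X :: "'a topology" and G :: "('g, 'b) monoid_scheme" and T :: "'g \<Rightarrow> 'a \<Rightarrow> 'a"
    and k :: nat
  assumes "compact_space X" and "metrizable_space X"
    and "group G" and "countable (carrier G)" and "amenable G"
    and "group_action_homeo G X T"
    and "even k"
  shows "smcid X G T k TYPE('r::comm_ring_1) \<le> mcid X G T k TYPE('r)"
  unfolding smcid_def mcid_def
proof (rule cSup_subset_mono)
  show "insert 0 {d. 0 \<le> d \<and> smcid_prop X G T k TYPE('r) d} \<noteq> {}" by simp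
  show "bdd_above (insert 0 {d. 0 \<le> d \<and> mcid_prop X G T k TYPE('r) d})"
    by (rule bdd_aboveI[of _ "real k + 1"]) (auto dest: mcid_prop_le)
  show "insert 0 {d. 0 \<le> d \<and> smcid_prop X G T k TYPE('r) d}
      \<subseteq> insert 0 {d. 0 \<le> d \<and> mcid_prop X G T k TYPE('r) d}"
    using smcid_prop_imp_mcid_prop[OF assms(6)] by auto
qed

end
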